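(* Let $n\geq 8$ and $4\leq k\leq n-4$. An $n$-tournament is $k$-skew-spectrally monomorphic if and only if it is switching equivalent to a transitive tournament.
   Context: An $n$-tournament is a digraph on vertex set $V$, $|V|=n$, in which every pair of distinct vertices is joined by exactly one arc. Its adjacency matrix $A=(a_{ij})$ has $a_{ij}=1$ if $v_i$ dominates $v_j$ and $0$ otherwise; its skew-adjacency matrix is $S=A-A^{\top}$. A tournament is $k$-skew-spectrally monomorphic if all $k\times k$ principal submatrices of $S$ have the same characteristic polynomial. A tournament is transitive if whenever $u$ dominates $v$ and $v$ dominates $w$, then $u$ dominates $w$. The switch of a tournament $T$ with respect to $X\subseteq V$ is the tournament obtained by reversing all arcs between $X$ and $V\setminus X$; two tournaments on the same vertex set are switching equivalent if one is a switch of the other. *)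

theory Defs
  imports "HOL-Computational_Algebra.Polynomial" "HOL-Combinatorics.Permutations"
begin

text \<open>A tournament on the finite vertex set V, given by the domination relation T
  (T u v means u dominates v); only arcs between vertices of V matter.\<close>
definition tournament :: "'a set \<Rightarrow> ('a \<Rightarrow> 'a \<Rightarrow> bool) \<Rightarrow> bool" where
  "tournament V T \<longleftrightarrow> finite V \<and> (\<forall>u\<in>V. \<not> T u u) \<and>
     (\<forall>u\<in>V. \<forall>v\<in>V. u \<noteq> v \<longrightarrow> (T u v \<longleftrightarrow> \<not> T v u))"

definition transitive_tournament :: "'a set \<Rightarrow> ('a \<Rightarrow> 'a \<Rightarrow> bool) \<Rightarrow> bool" where
  "transitive_tournament V T \<longleftrightarrow> tournament V T \<and>
     (\<forall>u\<in>V. \<forall>v\<in>V. \<forall>w\<in>V. T u v \<and> T v w \<longrightarrow> T u w)"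

definition skew_adj :: "('a \<Rightarrow> 'a \<Rightarrow> bool) \<Rightarrow> 'a \<Rightarrow> 'a \<Rightarrow> int" where
  "skew_adj T u v = (if T u v then 1 else 0) - (if T v u then 1 else 0)"

text \<open>Characteristic polynomial det(x I - M_X) of the principal submatrix of M
  indexed by the finite set X (Leibniz expansion of the determinant).\<close>
definition principal_charpoly :: "('a \<Rightarrow> 'a \<Rightarrow> int) \<Rightarrow> 'a set \<Rightarrow> int poly" where
  "principal_charpoly M X =
     (\<Sum>p\<in>{p. p permutes X}. of_int (sign p) *
        (\<Prod>i\<in>X. (if i = p i then [:0, 1:] else 0) - [:M i (p i):]))"

definition skew_spectrally_monomorphic :: "nat \<Rightarrow> 'a set \<Rightarrow> ('a \<Rightarrow> 'a \<Rightarrow> bool) \<Rightarrow> bool" where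
  "skew_spectrally_monomorphic k V T \<longleftrightarrow>
     (\<forall>X Y. X \<subseteq> V \<longrightarrow> Y \<subseteq> V \<longrightarrow> card X = k \<longrightarrow> card Y = k \<longrightarrow>
        principal_charpoly (skew_adj T) X = principal_charpoly (skew_adj T) Y)"

definition switch :: "('a \<Rightarrow> 'a \<Rightarrow> bool) \<Rightarrow> 'a set \<Rightarrow> 'a \<Rightarrow> 'a \<Rightarrow> bool" where
  "switch T X u v = (if (u \<in> X) = (v \<in> X) then T u v else T v u)"

definition switching_equivalent :: "'a set \<Rightarrow> ('a \<Rightarrow> 'a \<Rightarrow> bool) \<Rightarrow> ('a \<Rightarrow> 'a \<Rightarrow> bool) \<Rightarrow> bool" where
  "switching_equivalent V T T' \<longleftrightarrow>
     (\<exists>X\<subseteq>V. \<forall>u\<in>V. \<forall>v\<in>V. T' u v = switch T X u v)"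

end

theory Submission
  imports Defs
begin

text \<open>Switching conjugates the skew-adjacency matrix by a diagonal matrix of signs, so it
  preserves all principal characteristic polynomials; and all k-subtournaments of a transitive
  tournament are isomorphic. This gives sufficiency.

  Conversely, switch so that some vertex v becomes a source. The coefficient of x^(k-4) in a
  k \<times> k principal characteristic polynomial is the sum of the 4 \<times> 4 principal minors inside,
  and since k + 4 \<le> n an inclusion argument shows that all 4 \<times> 4 principal minors are equal.
  Such a minor is the square of a Pfaffian; for {v, a, b, c} it is 1 when abc is a transitive
  triangle and 9 when abc is cyclic. A cyclic triangle never contains the source, and together
  with any fifth vertex it yields a transitive triangle, so no cyclic triangle exists and the
  switched tournament is transitive.\<close>

section \<open>Principal minors and the characteristic polynomial\<close>

definition principal_minor :: "('a \<Rightarrow> 'a \<Rightarrow> int) \<Rightarrow> 'a set \<Rightarrow> int" where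
  "principal_minor M J = (\<Sum>p\<in>{p. p permutes J}. sign p * (\<Prod>i\<in>J. M i (p i)))"

lemma principal_minor_empty [simp]: "principal_minor M {} = 1"
  by (simp add: principal_minor_def)

text \<open>Expansion along the row of a: a permutation sending a to b is transpose a b composed
  with a permutation of the remaining indices.\<close>
lemma principal_minor_insert:
  assumes "finite S" and "a \<notin> S"
  shows "principal_minor M (insert a S) =
    (\<Sum>b\<in>insert a S. (if a = b then 1 else -1) * M a b *
       principal_minor (\<lambda>i j. M i (transpose a b j)) S)"
proof -
  have "principal_minor M (insert a S) = (\<Sum>b\<in>insert a S. \<Sum>q\<in>{p. p permutes S}.
          sign (transpose a b \<circ> q) * (\<Prod>i\<in>insert a S. M i ((transpose a b \<circ> q) i)))"
    unfolding principal_minor_def by (rule sum_over_permutations_insert[OF assms])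
  also have "\<dots> = (\<Sum>b\<in>insert a S. \<Sum>q\<in>{p. p permutes S}.
          (if a = b then 1 else -1) * M a b * (sign q * (\<Prod>i\<in>S. M i (transpose a b (q i)))))"
  proof (intro sum.cong refl)
    fix b q assume "q \<in> {p. p permutes S}"
    then have q: "q permutes S" by simp
    then have "permutation q" using assms(1) permutation_permutes by blast
    then have "sign (transpose a b \<circ> q) = (if a = b then 1 else -1) * sign q"
      by (simp add: sign_compose sign_swap_id permutation_swap_id)
    moreover have "q a = a" using q assms(2) permutes_not_in by metis
    ultimately show "sign (transpose a b \<circ> q) * (\<Prod>i\<in>insert a S. M i ((transpose a b \<circ> q) i)) =
        (if a = b then 1 else -1) * M a b * (sign q * (\<Prod>i\<in>S. M i (transpose a b (q i))))"
      using assms by simp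
  qed
  also have "\<dots> = (\<Sum>b\<in>insert a S. (if a = b then 1 else -1) * M a b *
       principal_minor (\<lambda>i j. M i (transpose a b j)) S)"
    unfolding principal_minor_def by (simp add: sum_distrib_left mult.assoc)
  finally show ?thesis .
qed

text \<open>A skew-symmetric 4 \<times> 4 determinant is the square of its Pfaffian.\<close>
lemma principal_minor_skew_4:
  assumes "distinct [a, b, c, d]" and "\<And>x y. M y x = - M x y"
  shows "principal_minor M {a, b, c, d} = (M a b * M c d - M a c * M b d + M a d * M b c)\<^sup>2"
proof -
  have diag: "M x x = 0" for x using assms(2)[of x x] by simp
  have "M b a = - M a b" "M c a = - M a c" "M d a = - M a d"
       "M c b = - M b c" "M d b = - M b d" "M d c = - M c d"
    by (rule assms(2))+
  moreover have "a \<noteq> b" "a \<noteq> c" "a \<noteq> d" "b \<noteq> c" "b \<noteq> d" "c \<noteq> d"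
    using assms(1) by auto
  ultimately show ?thesis
    using assms(1) by (simp add: principal_minor_insert transpose_def diag) (simp add: power2_eq_square algebra_simps)
qed

lemma permutes_fixing_eq:
  assumes "S \<subseteq> X"
  shows "{p. p permutes X \<and> (\<forall>i\<in>S. p i = i)} = {p. p permutes X - S}"
proof (intro set_eqI iffI; simp)
  fix p assume "p permutes X \<and> (\<forall>i\<in>S. p i = i)"
  then show "p permutes X - S" unfolding permutes_def by auto
next
  fix p assume p: "p permutes X - S"
  then have "p permutes X" by (rule permutes_subset) auto
  moreover have "\<forall>i\<in>S. p i = i" using p permutes_not_in by fastforce
  ultimately show "p permutes X \<and> (\<forall>i\<in>S. p i = i)" by simp
qed

lemma principal_charpoly_eq_sum_minors:
  assumes "finite X"
  shows "principal_charpoly M X =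
    (\<Sum>S\<in>Pow X. [:0, 1:] ^ card S * [:(-1) ^ card (X - S) * principal_minor M (X - S):])"
proof -
  let ?x = "\<lambda>p i. (if i = p i then [:0, 1:] else 0) :: int poly"
  let ?c = "\<lambda>p S. [:0, 1:] ^ card S * [:(-1) ^ card (X - S) * (sign p * (\<Prod>i\<in>X - S. M i (p i))):]"
  have expand: "of_int (sign p) * (\<Prod>i\<in>X. ?x p i - [:M i (p i):]) =
      (\<Sum>S\<in>Pow X. if \<forall>i\<in>S. p i = i then ?c p S else 0)" for p
  proof -
    have "of_int (sign p) * (\<Prod>i\<in>X. ?x p i + - [:M i (p i):]) =
        (\<Sum>S\<in>Pow X. of_int (sign p) * ((\<Prod>i\<in>S. ?x p i) * (\<Prod>i\<in>X - S. - [:M i (p i):])))"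
      unfolding prod_add[OF assms] sum_distrib_left ..
    also have "\<dots> = (\<Sum>S\<in>Pow X. if \<forall>i\<in>S. p i = i then ?c p S else 0)"
    proof (rule sum.cong[OF refl])
      fix S assume "S \<in> Pow X"
      then have "finite S" using assms finite_subset by auto
      have minus: "(\<Prod>i\<in>X - S. [:- M i (p i):]) = [:(-1) ^ card (X - S) * (\<Prod>i\<in>X - S. M i (p i)):]"
        by (simp add: prod_uminus prod_to_poly)
      show "of_int (sign p) * ((\<Prod>i\<in>S. ?x p i) * (\<Prod>i\<in>X - S. - [:M i (p i):])) =
          (if \<forall>i\<in>S. p i = i then ?c p S else 0)"
      proof (cases "\<forall>i\<in>S. p i = i")
        case True
        then have "(\<Prod>i\<in>S. ?x p i) = [:0, 1:] ^ card S" by simp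
        with True show ?thesis by (simp add: minus of_int_poly ac_simps)
      next
        case False
        then have "(\<Prod>i\<in>S. ?x p i) = 0" using \<open>finite S\<close> by (force intro!: prod_zero)
        with False show ?thesis by auto
      qed
    qed
    finally show ?thesis by (simp add: diff_conv_add_uminus)
  qed
  have "principal_charpoly M X = (\<Sum>p\<in>{p. p permutes X}. \<Sum>S\<in>Pow X. if \<forall>i\<in>S. p i = i then ?c p S else 0)"
    unfolding principal_charpoly_def by (simp add: expand)
  also have "\<dots> = (\<Sum>S\<in>Pow X. \<Sum>p\<in>{p. p permutes X \<and> (\<forall>i\<in>S. p i = i)}. ?c p S)"
    by (subst sum.swap) (simp add: sum.inter_filter[symmetric] finite_permutations assms)
  also have "\<dots> = (\<Sum>S\<in>Pow X. [:0, 1:] ^ card S * [:(-1) ^ card (X - S) * principal_minor M (X - S):])"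
    by (intro sum.cong refl)
      (simp add: permutes_fixing_eq principal_minor_def sum_distrib_left sum_to_poly[symmetric])
  finally show ?thesis .
qed

definition subset_sum :: "('a set \<Rightarrow> 'b::comm_monoid_add) \<Rightarrow> nat \<Rightarrow> 'a set \<Rightarrow> 'b" where
  "subset_sum g t X = (\<Sum>J\<in>{J. J \<subseteq> X \<and> card J = t}. g J)"

lemma coeff_principal_charpoly:
  assumes "finite X" and "t \<le> card X"
  shows "coeff (principal_charpoly M X) (card X - t) = (-1) ^ t * subset_sum (principal_minor M) t X"
proof -
  have "coeff (principal_charpoly M X) (card X - t) =
      (\<Sum>S\<in>{S\<in>Pow X. card S = card X - t}. (-1) ^ card (X - S) * principal_minor M (X - S))"
    by (simp add: principal_charpoly_eq_sum_minors[OF assms(1)] coeff_sum monom_altdef[symmetric]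
        sum.inter_filter[symmetric] assms(1))
  also have "\<dots> = (\<Sum>J\<in>{J. J \<subseteq> X \<and> card J = t}. (-1) ^ t * principal_minor M J)"
    by (rule sum.reindex_bij_witness[of _ "\<lambda>J. X - J" "\<lambda>S. X - S"])
      (use assms in \<open>auto simp: card_Diff_subset finite_subset\<close>)
  finally show ?thesis by (simp add: subset_sum_def sum_distrib_left)
qed

section \<open>Sums over subsets of fixed size\<close>

lemma subset_sum_insert:
  assumes "finite Z" and "a \<notin> Z"
  shows "subset_sum g (Suc t) (insert a Z) = subset_sum g (Suc t) Z + subset_sum (\<lambda>J. g (insert a J)) t Z"
proof -
  have split: "{J. J \<subseteq> insert a Z \<and> card J = Suc t} =
      {J. J \<subseteq> Z \<and> card J = Suc t} \<union> insert a ` {J. J \<subseteq> Z \<and> card J = t}"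
  proof (intro set_eqI iffI)
    fix J assume J: "J \<in> {J. J \<subseteq> insert a Z \<and> card J = Suc t}"
    show "J \<in> {J. J \<subseteq> Z \<and> card J = Suc t} \<union> insert a ` {J. J \<subseteq> Z \<and> card J = t}"
    proof (cases "a \<in> J")
      case True
      then have "J = insert a (J - {a})" "J - {a} \<subseteq> Z" "card (J - {a}) = t"
        using J assms(1) finite_subset by auto
      then show ?thesis by blast
    qed (use J in auto)
  next
    fix J assume "J \<in> {J. J \<subseteq> Z \<and> card J = Suc t} \<union> insert a ` {J. J \<subseteq> Z \<and> card J = t}"
    then show "J \<in> {J. J \<subseteq> insert a Z \<and> card J = Suc t}"
      using assms finite_subset by (fastforce simp: card_insert_if)
  qed
  have "inj_on (insert a) {J. J \<subseteq> Z \<and> card J = t}"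
    using assms(2) by (auto simp: inj_on_def)
  moreover have "{J. J \<subseteq> Z \<and> card J = Suc t} \<inter> insert a ` {J. J \<subseteq> Z \<and> card J = t} = {}"
    using assms(2) by auto
  ultimately show ?thesis
    unfolding subset_sum_def split using assms(1)
    by (simp add: sum.union_disjoint sum.reindex)
qed

lemma subset_sums_insert_eq:
  fixes g :: "'a set \<Rightarrow> 'b::cancel_comm_monoid_add"
  assumes "finite V"
    and "\<And>X Y. X \<subseteq> V \<Longrightarrow> Y \<subseteq> V \<Longrightarrow> card X = k \<Longrightarrow> card Y = k \<Longrightarrow> subset_sum g (Suc t) X = subset_sum g (Suc t) Y"
    and "a \<in> V" "b \<in> V" and "Z \<subseteq> V - {a, b}" "card Z = k - 1" and "1 \<le> k"
  shows "subset_sum (\<lambda>J. g (insert a J)) t Z = subset_sum (\<lambda>J. g (insert b J)) t Z"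
proof -
  have "finite Z" "a \<notin> Z" "b \<notin> Z" using assms(1,5) finite_subset by auto
  moreover have "subset_sum g (Suc t) (insert a Z) = subset_sum g (Suc t) (insert b Z)"
    using assms(3-7) calculation by (intro assms(2)) auto
  ultimately show ?thesis by (simp add: subset_sum_insert)
qed

lemma subset_sum_const:
  assumes "finite Z" and "\<And>J. J \<subseteq> Z \<Longrightarrow> card J = t \<Longrightarrow> g J = c"
  shows "subset_sum g t Z = of_nat (card Z choose t) * c"
proof -
  have "subset_sum g t Z = (\<Sum>J\<in>{J. J \<subseteq> Z \<and> card J = t}. c)"
    unfolding subset_sum_def using assms(2) by (intro sum.cong) auto
  then show ?thesis using n_subsets[OF assms(1)] by (simp add: mult_of_nat_commute)
qed

lemma eq_on_subsets_if_exchange: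
  assumes "finite V"
    and exch: "\<And>W a b. W \<subseteq> V \<Longrightarrow> card W = t \<Longrightarrow> a \<in> V - W \<Longrightarrow> b \<in> V - W \<Longrightarrow>
                 g (insert a W) = g (insert b W)"
    and "A \<subseteq> V" "B \<subseteq> V" "card A = Suc t" "card B = Suc t"
  shows "g A = g B"
  using assms(3,5)
proof (induction "card (A - B)" arbitrary: A)
  case 0
  have "finite A" "finite B" using assms(1,4) 0 finite_subset by auto
  then have "A \<subseteq> B" using 0 by auto
  then show ?case using \<open>finite B\<close> 0 assms(6) by (metis card_subset_eq)
next
  case (Suc m)
  have fin: "finite A" "finite B" using assms(1,4) Suc.prems finite_subset by auto
  obtain a where a: "a \<in> A" "a \<notin> B" using Suc.hyps(2) by (metis Diff_eq_empty_iff card.empty nat.distinct(1) subsetI)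
  have "\<not> B \<subseteq> A" using fin a Suc.prems(2) assms(6) card_subset_eq by metis
  then obtain b where b: "b \<in> B" "b \<notin> A" by auto
  define W where "W = A - {a}"
  have W: "W \<subseteq> V" "card W = t" "a \<in> V - W" "b \<in> V - W"
    using W_def Suc.prems a b fin assms(4) by auto
  have "g A = g (insert a W)" using W_def a by (simp add: insert_absorb)
  also have "\<dots> = g (insert b W)" using exch W by blast
  also have "\<dots> = g B"
  proof (rule Suc.hyps(1))
    have "insert b W - B = (A - B) - {a}" using W_def a b by auto
    then show "m = card (insert b W - B)" using Suc.hyps(2) a fin by simp
  qed (use W fin W_def in auto)
  finally show ?case .
qed

text \<open>A Gottlieb--Kantor type inclusion argument. For the exchange step, the difference
  g(W + a) - g(W + b) inherits the hypothesis on V - {a, b} with k - 1, hence is constant by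
  induction, and then zero since its sums vanish.\<close>
lemma eq_on_subsets_if_subset_sums_eq:
  fixes g :: "'a set \<Rightarrow> 'b::{idom, ring_char_0}"
  assumes "finite V" and "t \<le> k" and "k + t \<le> card V"
    and "\<And>X Y. X \<subseteq> V \<Longrightarrow> Y \<subseteq> V \<Longrightarrow> card X = k \<Longrightarrow> card Y = k \<Longrightarrow> subset_sum g t X = subset_sum g t Y"
    and "A \<subseteq> V" "B \<subseteq> V" "card A = t" "card B = t"
  shows "g A = g B"
  using assms
proof (induction t arbitrary: V g k A B)
  case 0
  then have "A = {}" "B = {}" using finite_subset[of _ V] by auto
  then show ?case by simp
next
  case (Suc t)
  show ?case
  proof (rule eq_on_subsets_if_exchange[OF Suc.prems(1) _ Suc.prems(5-8)])
    fix W a b assume W: "W \<subseteq> V" "card W = t" and a: "a \<in> V - W" and b: "b \<in> V - W"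
    show "g (insert a W) = g (insert b W)"
    proof (cases "a = b")
      case False
      define V' where "V' = V - {a, b}"
      define h where "h J = g (insert a J) - g (insert b J)" for J
      have fin: "finite V'" using Suc.prems(1) V'_def by auto
      have W': "W \<subseteq> V'" using W a b V'_def by auto
      have card_V': "card V' = card V - 2"
        using a b False Suc.prems(1) unfolding V'_def by (simp add: card_Diff_subset)
      have "a \<in> V" "b \<in> V" "1 \<le> k" using a b Suc.prems(2) by auto
      have sums_vanish: "subset_sum h t Z = 0" if "Z \<subseteq> V'" "card Z = k - 1" for Z
      proof -
        have "subset_sum (\<lambda>J. g (insert a J)) t Z = subset_sum (\<lambda>J. g (insert b J)) t Z"
          using that unfolding V'_def
          by (intro subset_sums_insert_eq[OF Suc.prems(1,4) \<open>a \<in> V\<close> \<open>b \<in> V\<close> _ _ \<open>1 \<le> k\<close>])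
        then show ?thesis by (simp add: h_def subset_sum_def sum_subtractf)
      qed
      have h_const: "h J = h W" if "J \<subseteq> V'" "card J = t" for J
        using Suc.IH[OF fin _ _ _ that(1) W' that(2) W(2), of "k - 1"] Suc.prems(2,3) card_V' sums_vanish that
        by fastforce
      have "card W \<le> k - 1" "k - 1 \<le> card V'" using W(2) card_V' Suc.prems(2,3) by linarith+
      then obtain Z where Z: "W \<subseteq> Z" "Z \<subseteq> V'" "card Z = k - 1"
        using exists_subset_between[of W "k - 1" V'] W' fin by blast
      have "finite Z" using Z(2) fin finite_subset by blast
      then have "of_nat (card Z choose t) * h W = 0"
        using subset_sum_const[of Z t h "h W"] h_const Z sums_vanish[OF Z(2,3)] by auto
      moreover have "card Z choose t > 0" using Z Suc.prems(2) by simp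
      ultimately show ?thesis by (simp add: h_def)
    qed simp
  qed
qed

lemma principal_minors_eq_if_skew_spectrally_monomorphic:
  assumes "skew_spectrally_monomorphic k V T" and "finite V" and "t \<le> k" and "k + t \<le> card V"
    and "A \<subseteq> V" "B \<subseteq> V" "card A = t" "card B = t"
  shows "principal_minor (skew_adj T) A = principal_minor (skew_adj T) B"
proof (rule eq_on_subsets_if_subset_sums_eq[OF assms(2-4) _ assms(5-8)])
  fix X Y assume XY: "X \<subseteq> V" "Y \<subseteq> V" "card X = k" "card Y = k"
  then have "finite X" "finite Y" using assms(2) finite_subset by auto
  let ?M = "skew_adj T"
  have "(-1) ^ t * subset_sum (principal_minor ?M) t X = coeff (principal_charpoly ?M X) (k - t)"
    using coeff_principal_charpoly[OF \<open>finite X\<close>, of t ?M] XY assms(3) by simp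
  also have "\<dots> = coeff (principal_charpoly ?M Y) (k - t)"
    using assms(1) XY unfolding skew_spectrally_monomorphic_def by metis
  also have "\<dots> = (-1) ^ t * subset_sum (principal_minor ?M) t Y"
    using coeff_principal_charpoly[OF \<open>finite Y\<close>, of t ?M] XY assms(3) by simp
  finally show "subset_sum (principal_minor ?M) t X = subset_sum (principal_minor ?M) t Y"
    by simp
qed

section \<open>Switching and relabelling\<close>

lemma principal_charpoly_cong:
  assumes "\<And>i j. i \<in> X \<Longrightarrow> j \<in> X \<Longrightarrow> M' i j = M i j"
  shows "principal_charpoly M' X = principal_charpoly M X"
  unfolding principal_charpoly_def
  using assms by (intro sum.cong refl arg_cong2[where f = "(*)"] prod.cong) (auto simp: permutes_in_image)

text \<open>Along a permutation p each term picks up the factors e(i) e(p(i)), which multiply to 1.\<close>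
lemma principal_charpoly_sign_conj:
  fixes e :: "'a \<Rightarrow> int"
  assumes M': "\<And>u v. M' u v = e u * e v * M u v" and e: "\<And>u. e u * e u = 1"
  shows "principal_charpoly M' X = principal_charpoly M X"
  unfolding principal_charpoly_def
proof (rule sum.cong[OF refl])
  fix p assume "p \<in> {p. p permutes X}"
  then have p: "p permutes X" by simp
  have factor: "(if i = p i then [:0, 1:] else 0) - [:M' i (p i):] =
      [:e i * e (p i):] * ((if i = p i then [:0, 1:] else 0) - [:M i (p i):])" for i
    using e[of i] by (cases "i = p i") (simp_all add: M' algebra_simps)
  have "(\<Prod>i\<in>X. e i * e (p i)) = (\<Prod>i\<in>X. e i) * (\<Prod>i\<in>X. e i)"
    using prod.permute[OF p, of e] by (simp add: prod.distrib o_def)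
  also have "\<dots> = 1" using e by (simp flip: prod.distrib)
  finally have "(\<Prod>i\<in>X. [:e i * e (p i):]) = 1" by (simp add: prod_to_poly one_pCons)
  moreover have "(\<Prod>i\<in>X. (if i = p i then [:0, 1:] else 0) - [:M' i (p i):]) =
      (\<Prod>i\<in>X. [:e i * e (p i):]) * (\<Prod>i\<in>X. (if i = p i then [:0, 1:] else 0) - [:M i (p i):])"
    unfolding factor by (rule prod.distrib)
  ultimately show "of_int (sign p) * (\<Prod>i\<in>X. (if i = p i then [:0, 1:] else 0) - [:M' i (p i):]) =
      of_int (sign p) * (\<Prod>i\<in>X. (if i = p i then [:0, 1:] else 0) - [:M i (p i):])"
    by simp
qed

lemma skew_adj_switch:
  "skew_adj (switch T Y) u v = (if u \<in> Y then -1 else 1) * (if v \<in> Y then -1 else 1) * skew_adj T u v"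
  unfolding skew_adj_def switch_def by auto

lemma principal_charpoly_skew_adj_switch:
  "principal_charpoly (skew_adj (switch T Y)) X = principal_charpoly (skew_adj T) X"
  by (rule principal_charpoly_sign_conj[OF skew_adj_switch]) simp

lemma skew_spectrally_monomorphic_switch_iff:
  "skew_spectrally_monomorphic k V (switch T Y) \<longleftrightarrow> skew_spectrally_monomorphic k V T"
  by (simp add: skew_spectrally_monomorphic_def principal_charpoly_skew_adj_switch)

lemma skew_spectrally_monomorphic_cong:
  assumes "\<And>u v. u \<in> V \<Longrightarrow> v \<in> V \<Longrightarrow> T' u v = T u v"
  shows "skew_spectrally_monomorphic k V T' \<longleftrightarrow> skew_spectrally_monomorphic k V T"
proof -
  have "principal_charpoly (skew_adj T') X = principal_charpoly (skew_adj T) X" if "X \<subseteq> V" for X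
    using that assms by (intro principal_charpoly_cong) (auto simp: skew_adj_def)
  then show ?thesis unfolding skew_spectrally_monomorphic_def by simp
qed

lemma tournament_switch:
  assumes "tournament V T"
  shows "tournament V (switch T Y)"
proof -
  have "switch T Y u v \<longleftrightarrow> \<not> switch T Y v u" if "u \<in> V" "v \<in> V" "u \<noteq> v" for u v
  proof -
    have "T u v \<longleftrightarrow> \<not> T v u" using assms that unfolding tournament_def by blast
    then show ?thesis unfolding switch_def by (cases "u \<in> Y"; cases "v \<in> Y") simp_all
  qed
  moreover have "\<not> switch T Y u u" if "u \<in> V" for u
    using assms that unfolding tournament_def switch_def by simp
  ultimately show ?thesis using assms unfolding tournament_def by blast
qed

lemma principal_charpoly_reindex:
  assumes f: "bij_betw f X Y" and "finite X"
    and M: "\<And>i j. i \<in> X \<Longrightarrow> j \<in> X \<Longrightarrow> M' (f i) (f j) = M i j"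
  shows "principal_charpoly M' Y = principal_charpoly M X"
proof -
  have inj: "inj_on f X" and Y: "Y = f ` X" using f by (auto simp: bij_betw_def)
  have g: "bij_betw (inv_into X f) Y X" using f by (rule bij_betw_inv_into)
  let ?q = "map_permutation X f"
  have term_eq: "of_int (sign (?q p)) * (\<Prod>i\<in>Y. (if i = ?q p i then [:0, 1:] else 0) - [:M' i (?q p i):]) =
      of_int (sign p) * (\<Prod>i\<in>X. (if i = p i then [:0, 1:] else 0) - [:M i (p i):])"
    if p: "p permutes X" for p
  proof -
    have "p i \<in> X" "f i = f (p i) \<longleftrightarrow> i = p i" if "i \<in> X" for i
      using p that inj by (auto simp: permutes_in_image inj_on_eq_iff)
    then show ?thesis
      unfolding Y using sign_map_permutation[OF inj p assms(2)]
      by (simp add: prod.reindex[OF inj] map_permutation_apply[OF inj] M)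
  qed
  show ?thesis
    unfolding principal_charpoly_def
  proof (rule sym, rule sum.reindex_bij_witness[of _ "map_permutation Y (inv_into X f)" ?q])
    fix p assume "p \<in> {p. p permutes X}"
    then have p: "p permutes X" by simp
    show "map_permutation Y (inv_into X f) (?q p) = p"
      using map_permutation_compose_inv[OF f p] inj by auto
    show "?q p \<in> {p. p permutes Y}" using map_permutation_permutes[OF f p] by simp
  next
    fix q assume "q \<in> {p. p permutes Y}"
    then have q: "q permutes Y" by simp
    show "?q (map_permutation Y (inv_into X f) q) = q"
      using map_permutation_compose_inv[OF g q] f by (auto simp: Y f_inv_into_f)
    show "map_permutation Y (inv_into X f) q \<in> {p. p permutes X}"
      using map_permutation_permutes[OF g q] by simp
  qed (use term_eq in simp)
qed

section \<open>Transitive tournaments\<close>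

lemma transitive_tournament_rank:
  assumes "transitive_tournament V T" and "X \<subseteq> V"
  obtains r where "bij_betw r X {0..<card X}" and "\<And>u w. u \<in> X \<Longrightarrow> w \<in> X \<Longrightarrow> T u w \<longleftrightarrow> r u < r w"
proof -
  have tr: "\<And>u v w. u \<in> V \<Longrightarrow> v \<in> V \<Longrightarrow> w \<in> V \<Longrightarrow> T u v \<Longrightarrow> T v w \<Longrightarrow> T u w"
    and irr: "\<And>u. u \<in> V \<Longrightarrow> \<not> T u u"
    and tot: "\<And>u v. u \<in> V \<Longrightarrow> v \<in> V \<Longrightarrow> u \<noteq> v \<Longrightarrow> T u v \<longleftrightarrow> \<not> T v u"
    using assms(1) unfolding transitive_tournament_def tournament_def by blast+
  have fin: "finite X" using assms finite_subset unfolding transitive_tournament_def tournament_def by blast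
  define r where "r u = card {w\<in>X. T w u}" for u
  have mono: "r u < r w" if "u \<in> X" "w \<in> X" "T u w" for u w
  proof -
    have "{w'\<in>X. T w' u} \<subset> {w'\<in>X. T w' w}" using tr irr that assms(2) by blast
    then show ?thesis unfolding r_def using fin by (intro psubset_card_mono) auto
  qed
  have tot_X: "T u w \<or> T w u" if "u \<in> X" "w \<in> X" "u \<noteq> w" for u w
    using tot that assms(2) by blast
  have iff: "T u w \<longleftrightarrow> r u < r w" if "u \<in> X" "w \<in> X" for u w
  proof (cases "u = w")
    case True
    then show ?thesis using irr that assms(2) by blast
  next
    case False
    then show ?thesis using mono[OF that] mono[OF that(2,1)] tot_X[OF that] by auto
  qed
  have "inj_on r X"
  proof (rule inj_onI, rule ccontr)
    fix u w assume "u \<in> X" "w \<in> X" "r u = r w" "u \<noteq> w"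
    then show False using tot_X iff by (metis less_irrefl)
  qed
  moreover have "r u < card X" if "u \<in> X" for u
  proof -
    have "{w\<in>X. T w u} \<subset> X" using irr that assms(2) by blast
    then show ?thesis unfolding r_def using fin by (simp add: psubset_card_mono)
  qed
  ultimately have "r ` X = {0..<card X}"
    by (intro card_subset_eq) (auto simp: card_image)
  with \<open>inj_on r X\<close> have "bij_betw r X {0..<card X}" by (simp add: bij_betw_def)
  with iff show ?thesis using that by blast
qed

lemma principal_charpoly_transitive_tournament:
  assumes "transitive_tournament V T" and "X \<subseteq> V"
  shows "principal_charpoly (skew_adj T) X = principal_charpoly (skew_adj ((<) :: nat \<Rightarrow> nat \<Rightarrow> bool)) {0..<card X}"
proof -
  obtain r where r: "bij_betw r X {0..<card X}" and iff: "\<And>u w. u \<in> X \<Longrightarrow> w \<in> X \<Longrightarrow> T u w \<longleftrightarrow> r u < r w"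
    using transitive_tournament_rank[OF assms] by blast
  have "finite X"
    using assms finite_subset unfolding transitive_tournament_def tournament_def by blast
  then show ?thesis
    by (rule principal_charpoly_reindex[OF r _, symmetric]) (simp add: skew_adj_def iff)
qed

lemma transitive_tournament_imp_skew_spectrally_monomorphic:
  assumes "transitive_tournament V T"
  shows "skew_spectrally_monomorphic k V T"
  unfolding skew_spectrally_monomorphic_def
  using principal_charpoly_transitive_tournament[OF assms] by simp

section \<open>Tournaments with a source\<close>

lemma skew_adj_tournament:
  assumes "tournament V T" and "u \<in> V" "w \<in> V" "T u w"
  shows "skew_adj T u w = 1"
proof -
  have "u \<noteq> w" using assms unfolding tournament_def by blast
  then have "\<not> T w u" using assms unfolding tournament_def by blast
  with assms(4) show ?thesis by (simp add: skew_adj_def)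
qed

lemma skew_adj_antisym: "skew_adj T w u = - skew_adj T u w"
  by (simp add: skew_adj_def)

lemma switch_to_source:
  assumes "tournament V T" and "v \<in> V" "u \<in> V" "u \<noteq> v"
  shows "switch T {w\<in>V. T w v} v u"
proof -
  have "\<not> T v v" "T v u \<longleftrightarrow> \<not> T u v" using assms unfolding tournament_def by blast+
  with assms(2,3) show ?thesis by (simp add: switch_def)
qed

text \<open>With a source v, the Pfaffian of {v, a, b, c} reduces to the cyclic sum of the
  arcs of the triangle abc: it is 1 for a transitive and 3 for a cyclic triangle.\<close>
lemma principal_minor_with_source:
  assumes "tournament V T" and "v \<in> V" "a \<in> V" "b \<in> V" "c \<in> V" and "distinct [v, a, b, c]"
    and source: "\<And>u. u \<in> V \<Longrightarrow> u \<noteq> v \<Longrightarrow> T v u"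
  shows "principal_minor (skew_adj T) {v, a, b, c} =
    (skew_adj T a b + skew_adj T b c + skew_adj T c a)\<^sup>2"
proof -
  have "skew_adj T v x = 1" if "x \<in> {a, b, c}" for x
    using assms that by (intro skew_adj_tournament[OF assms(1,2)] source) auto
  then show ?thesis
    using principal_minor_skew_4[of v a b c "skew_adj T", OF assms(6) skew_adj_antisym] skew_adj_antisym[of T a c]
    by (simp add: algebra_simps)
qed

lemma transitive_triangle_near_cyclic_triangle:
  assumes "tournament V T" and "u \<in> V" "w \<in> V" "z \<in> V" "y \<in> V" and "distinct [u, w, z, y]"
    and "T u w" "T w z" "T z u"
  shows "\<exists>a b c. {a, b, c} \<subseteq> {u, w, z, y} \<and> distinct [a, b, c] \<and> T a b \<and> T b c \<and> T a c"
proof -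
  have "T y u \<or> T u y" "T y w \<or> T w y" "T y z \<or> T z y"
    using assms(1-6) unfolding tournament_def by auto
  moreover have "u \<noteq> w" "w \<noteq> z" "u \<noteq> z" "y \<noteq> u" "y \<noteq> w" "y \<noteq> z" using assms(6) by auto
  ultimately show ?thesis using assms(7-9) by (simp; blast)
qed

lemma principal_minors_4_differ_if_cyclic_triangle:
  assumes T: "tournament V T" and "v \<in> V" and "5 \<le> card V"
    and source: "\<And>u. u \<in> V \<Longrightarrow> u \<noteq> v \<Longrightarrow> T v u"
    and V: "u \<in> V" "w \<in> V" "z \<in> V" and uw: "T u w" and wz: "T w z" and zu: "T z u"
  shows "\<exists>A B. A \<subseteq> V \<and> B \<subseteq> V \<and> card A = 4 \<and> card B = 4 \<and>
    principal_minor (skew_adj T) A \<noteq> principal_minor (skew_adj T) B"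
proof -
  have irr: "\<And>u. u \<in> V \<Longrightarrow> \<not> T u u"
    and tot: "\<And>u w. u \<in> V \<Longrightarrow> w \<in> V \<Longrightarrow> u \<noteq> w \<Longrightarrow> T u w \<longleftrightarrow> \<not> T w u"
    using T unfolding tournament_def by blast+
  have "u \<noteq> w" "w \<noteq> z" "u \<noteq> z" using V uw wz zu irr tot by metis+
  moreover have "x \<noteq> v" if "T y x" "x \<in> V" "y \<in> V" for x y
    using that irr tot source \<open>v \<in> V\<close> by metis
  then have "u \<noteq> v" "w \<noteq> v" "z \<noteq> v" using V uw wz zu by blast+
  ultimately have distinct: "distinct [v, u, w, z]" by auto
  then have card4: "card {v, u, w, z} = 4" by simp
  have "\<not> V \<subseteq> {v, u, w, z}"
  proof
    assume "V \<subseteq> {v, u, w, z}"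
    then have "card V \<le> 4" using card_mono[of "{v, u, w, z}" V] card4 by simp
    then show False using assms(3) by simp
  qed
  then obtain y where y: "y \<in> V" "y \<notin> {v, u, w, z}" by blast
  with distinct have "distinct [u, w, z, y]" by auto
  then obtain a b c where abc: "{a, b, c} \<subseteq> {u, w, z, y}" "distinct [a, b, c]" "T a b" "T b c" "T a c"
    using transitive_triangle_near_cyclic_triangle[OF T V y(1) _ uw wz zu] by blast
  have abc_V: "a \<in> V" "b \<in> V" "c \<in> V" using abc(1) V y(1) by auto
  have "distinct [v, a, b, c]" using abc(1,2) distinct y(2) by auto
  then have "principal_minor (skew_adj T) {v, a, b, c} = 1" "card {v, a, b, c} = 4"
    using principal_minor_with_source[OF T \<open>v \<in> V\<close> abc_V _ source] abc(3-5) abc_V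
    by (simp_all add: skew_adj_tournament[OF T] skew_adj_antisym[of T c a])
  moreover have "principal_minor (skew_adj T) {v, u, w, z} = 9"
    using principal_minor_with_source[OF T \<open>v \<in> V\<close> V distinct source] uw wz zu V
    by (simp add: skew_adj_tournament[OF T])
  ultimately show ?thesis
    using card4 abc_V V \<open>v \<in> V\<close> by (intro exI[of _ "{v, a, b, c}"] exI[of _ "{v, u, w, z}"]) simp
qed

lemma transitive_if_principal_minors_4_eq:
  assumes T: "tournament V T" and "v \<in> V" and "5 \<le> card V"
    and source: "\<And>u. u \<in> V \<Longrightarrow> u \<noteq> v \<Longrightarrow> T v u"
    and minors_eq: "\<And>A B. A \<subseteq> V \<Longrightarrow> B \<subseteq> V \<Longrightarrow> card A = 4 \<Longrightarrow> card B = 4 \<Longrightarrow>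
      principal_minor (skew_adj T) A = principal_minor (skew_adj T) B"
  shows "transitive_tournament V T"
proof -
  have "T u z" if V: "u \<in> V" "w \<in> V" "z \<in> V" and "T u w" "T w z" for u w z
  proof (rule ccontr)
    assume "\<not> T u z"
    moreover have "u \<noteq> z" using that T unfolding tournament_def by metis
    ultimately have "T z u" using T V unfolding tournament_def by blast
    then show False
      using principal_minors_4_differ_if_cyclic_triangle[OF assms(1-4) V \<open>T u w\<close> \<open>T w z\<close>] minors_eq
      by blast
  qed
  with T show ?thesis unfolding transitive_tournament_def by blast
qed

theorem proposition5p1:
  fixes V :: "'a set" and T :: "'a \<Rightarrow> 'a \<Rightarrow> bool" and n k :: nat
  assumes "tournament V T" and "card V = n" and "n \<ge> 8" and "4 \<le> k" and "k \<le> n - 4"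
  shows "skew_spectrally_monomorphic k V T \<longleftrightarrow>
           (\<exists>T'. transitive_tournament V T' \<and> switching_equivalent V T T')"
proof
  assume mono: "skew_spectrally_monomorphic k V T"
  have fin: "finite V" using assms(1) by (simp add: tournament_def)
  have size: "k + 4 \<le> card V" "5 \<le> card V" using assms(2-5) by linarith+
  then obtain v where v: "v \<in> V" by (metis card.empty ex_in_conv not_numeral_le_zero)
  define Y where "Y = {u\<in>V. T u v}"
  have "skew_spectrally_monomorphic k V (switch T Y)"
    using mono by (simp add: skew_spectrally_monomorphic_switch_iff)
  then have "transitive_tournament V (switch T Y)"
    using tournament_switch[OF assms(1)] switch_to_source[OF assms(1) v, folded Y_def]
      principal_minors_eq_if_skew_spectrally_monomorphic[OF _ fin assms(4) size(1)]
    by (intro transitive_if_principal_minors_4_eq[OF _ v size(2)])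
  moreover have "switching_equivalent V T (switch T Y)"
    unfolding switching_equivalent_def by (intro exI[of _ Y]) (auto simp: Y_def)
  ultimately show "\<exists>T'. transitive_tournament V T' \<and> switching_equivalent V T T'" by blast
next
  assume "\<exists>T'. transitive_tournament V T' \<and> switching_equivalent V T T'"
  then obtain T' Y where "transitive_tournament V T'" and "\<forall>u\<in>V. \<forall>w\<in>V. T' u w = switch T Y u w"
    unfolding switching_equivalent_def by blast
  then have "skew_spectrally_monomorphic k V (switch T Y)"
    using transitive_tournament_imp_skew_spectrally_monomorphic skew_spectrally_monomorphic_cong[of V T' "switch T Y" k]
    by blast
  then show "skew_spectrally_monomorphic k V T"
    by (simp add: skew_spectrally_monomorphic_switch_iff)
qed

end
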